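(* Let $\Omega\subset\mathbb{R}^{n+1}$ be an open set satisfying the corkscrew condition with $d$-ADR boundary, $d\in(0,n]$, let $\mathbb{D}$ be a dyadic system on $\partial\Omega$, and let $\mathcal{W}$ and $\mathcal{W}_Q$ ($Q\in\mathbb{D}$) be as below. Then for every $Q\in\mathbb{D}$ and every $\kappa\in(0,\infty)$, $$\sum_{\substack{Q'\in\mathbb{D}_Q\\ \operatorname{dist}(Q',\partial\Omega\setminus Q)\le\kappa\ell(Q')}}\ \sum_{I\in\mathcal{W}_{Q'}}\mathcal{H}^n(\partial I)\le C_\kappa\,\ell(Q)^n,$$ where $C_\kappa$ depends only on $\kappa$, $n$, $d$, the ADR and dyadic constants, and $\eta,K$.
   Context: $d$-ADR: $C^{-1}r^d\le\sigma(B(x,r)\cap\partial\Omega)\le Cr^d$, $\sigma=\mathcal{H}^d\lfloor_{\partial\Omega}$. A dyadic system $\mathbb{D}=\bigcup_k\mathbb{D}_k$ on $\partial\Omega$: nested Borel sets, each $\mathbb{D}_k$ a disjoint partition of $\partial\Omega$, each $Q\in\mathbb{D}_k$ with $B(z_Q,c_12^{-k})\cap\partial\Omega\subset Q\subset B(z_Q,C_12^{-k})\cap\partial\Omega$, each cube the union of at most $N$ children in $\mathbb{D}_{k+1}$, and thin boundaries: $\sigma(\{x\in Q:\operatorname{dist}(x,\partial\Omega\setminus Q)\le\varrho2^{-k}\})\le C_1\varrho^\gamma\sigma(Q)$ for $Q\in\mathbb{D}_k$, $\varrho\in(0,c_1)$; $\ell(Q):=2^{-k}$, $\mathbb{D}_Q$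 is the set of dyadic subcubes of $Q$. $\mathcal{W}$ is a Whitney decomposition of $\Omega$: a family of half-open cubes $I=\prod_{k=1}^{n+1}(a_k,a_k+h]$ ($\ell(I)=h$), pairwise disjoint, with union $\Omega$, such that $4\operatorname{diam}(I)\le\operatorname{dist}(4I,\partial\Omega)\le\operatorname{dist}(I,\partial\Omega)\le40\operatorname{diam}(I)$, and $\frac14\operatorname{diam}I_1\le\operatorname{diam}I_2\le4\operatorname{diam}I_1$ whenever $\overline{I_1}\cap\overline{I_2}\ne\emptyset$. For fixed parameters $0<\eta\ll1\ll K$, $\mathcal{W}_Q:=\{I\in\mathcal{W}:\eta^{1/4}\ell(Q)\le\ell(I)\le K^{1/2}\ell(Q),\ \operatorname{dist}(I,Q)\le K^{1/2}\ell(Q)\}$. *)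

theory Defs
  imports "HOL-Analysis.Analysis"
begin

definition hausdorff_norm :: "real \<Rightarrow> real" where
  "hausdorff_norm s = pi powr (s / 2) / (Gamma (s / 2 + 1) * 2 powr s)"

definition hausdorff_pre :: "real \<Rightarrow> real \<Rightarrow> 'a::euclidean_space set \<Rightarrow> ennreal" where
  "hausdorff_pre s \<delta> E =
     (INF f \<in> {f :: nat \<Rightarrow> 'a set. E \<subseteq> (\<Union>i. f i) \<and>
                 (\<forall>i. bounded (f i) \<and> diameter (f i) \<le> \<delta>)}.
        (\<Sum>i. ennreal (hausdorff_norm s * diameter (f i) powr s)))"

definition hausdorff :: "real \<Rightarrow> 'a::euclidean_space set \<Rightarrow> ennreal" where
  "hausdorff s E = (SUP \<delta> \<in> {0<..}. hausdorff_pre s \<delta> E)"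

text \<open>near A B t means dist(A,B) \<le> t, where the distance to the empty set is infinite.\<close>
definition near :: "'a::metric_space set \<Rightarrow> 'a set \<Rightarrow> real \<Rightarrow> bool" where
  "near A B t \<longleftrightarrow> A \<noteq> {} \<and> B \<noteq> {} \<and> setdist A B \<le> t"

definition below_diam :: "'a::metric_space set \<Rightarrow> real \<Rightarrow> bool" where
  "below_diam E r \<longleftrightarrow> (\<not> bounded E \<or> r < diameter E)"

definition corkscrew :: "'a::euclidean_space set \<Rightarrow> bool" where
  "corkscrew \<Omega> \<longleftrightarrow> (\<exists>c. 0 < c \<and> c < 1 \<and>
     (\<forall>x\<in>frontier \<Omega>. \<forall>r. 0 < r \<and> below_diam (frontier \<Omega>) r \<longrightarrow>
        (\<exists>X. ball X (c * r) \<subseteq> ball x r \<inter> \<Omega>)))"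

definition ADR :: "real \<Rightarrow> real \<Rightarrow> 'a::euclidean_space set \<Rightarrow> bool" where
  "ADR d C E \<longleftrightarrow> C \<ge> 1 \<and> E \<noteq> {} \<and> closed E \<and>
     (\<forall>x\<in>E. \<forall>r. 0 < r \<and> below_diam E r \<longrightarrow>
        ennreal (r powr d / C) \<le> hausdorff d (ball x r \<inter> E) \<and>
        hausdorff d (ball x r \<inter> E) \<le> ennreal (C * r powr d))"

text \<open>Dyadic system on E with levels L (all integers, or all integers \<ge> k0);
  D k is the generation of cubes of side length 2^(-k). sigma = H^d restricted to E.\<close>
definition dyadic_system ::
  "real \<Rightarrow> 'a::euclidean_space set \<Rightarrow> int set \<Rightarrow> (int \<Rightarrow> 'a set set)
     \<Rightarrow> real \<Rightarrow> real \<Rightarrow> nat \<Rightarrow> real \<Rightarrow> bool" where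
  "dyadic_system d E L D c1 C1 N \<gamma> \<longleftrightarrow>
     0 < c1 \<and> c1 \<le> C1 \<and> 0 < \<gamma> \<and>
     (L = UNIV \<or> (\<exists>k0. L = {k0..})) \<and>
     (\<forall>k\<in>L. (\<forall>Q\<in>D k. Q \<in> sets borel \<and> Q \<subseteq> E) \<and> \<Union>(D k) = E \<and>
        (\<forall>Q\<in>D k. \<forall>Q'\<in>D k. Q \<noteq> Q' \<longrightarrow> Q \<inter> Q' = {})) \<and>
     (\<forall>k\<in>L. \<forall>k'\<in>L. k \<le> k' \<longrightarrow> (\<forall>Q\<in>D k. \<forall>Q'\<in>D k'. Q' \<subseteq> Q \<or> Q' \<inter> Q = {})) \<and>
     (\<forall>k\<in>L. \<forall>Q\<in>D k. \<exists>z\<in>E. ball z (c1 * 2 powr (- k)) \<inter> E \<subseteq> Q \<and>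
                              Q \<subseteq> ball z (C1 * 2 powr (- k)) \<inter> E) \<and>
     (\<forall>k\<in>L. \<forall>Q\<in>D k. \<exists>F. F \<subseteq> D (k + 1) \<and> finite F \<and> card F \<le> N \<and> Q = \<Union>F) \<and>
     (\<forall>k\<in>L. \<forall>Q\<in>D k. \<forall>\<rho>. 0 < \<rho> \<and> \<rho> < c1 \<longrightarrow>
        hausdorff d {x\<in>Q. near {x} (E - Q) (\<rho> * 2 powr (- k))}
          \<le> ennreal (C1 * \<rho> powr \<gamma>) * hausdorff d Q)"

text \<open>Dyadic cubes as pairs (level, set); \<ell>(Q) = 2^(-level).\<close>
definition dcubes :: "int set \<Rightarrow> (int \<Rightarrow> 'a set set) \<Rightarrow> (int \<times> 'a set) set" where
  "dcubes L D = {(k, Q). k \<in> L \<and> Q \<in> D k}"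

definition dsubcubes :: "int set \<Rightarrow> (int \<Rightarrow> 'a set set) \<Rightarrow> int \<times> 'a set \<Rightarrow> (int \<times> 'a set) set" where
  "dsubcubes L D Q = {Q' \<in> dcubes L D. fst Q \<le> fst Q' \<and> snd Q' \<subseteq> snd Q}"

definition dlen :: "int \<times> 'a set \<Rightarrow> real" where
  "dlen Q = 2 powr (- fst Q)"

section \<open>Whitney cubes: I = (a,h) stands for prod_i (a_i, a_i + h]\<close>

definition wcube :: "'a::euclidean_space \<times> real \<Rightarrow> 'a set" where
  "wcube I = {x. \<forall>i\<in>Basis. fst I \<bullet> i < x \<bullet> i \<and> x \<bullet> i \<le> fst I \<bullet> i + snd I}"

text \<open>The concentric cube with t times the side length.\<close>
definition wdilate :: "real \<Rightarrow> 'a::euclidean_space \<times> real \<Rightarrow> 'a \<times> real" where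
  "wdilate t I = (fst I - ((t - 1) * snd I / 2) *\<^sub>R One, t * snd I)"

definition whitney :: "'a::euclidean_space set \<Rightarrow> ('a \<times> real) set \<Rightarrow> bool" where
  "whitney \<Omega> W \<longleftrightarrow>
     (\<forall>I\<in>W. snd I > 0) \<and>
     (\<forall>I\<in>W. \<forall>J\<in>W. I \<noteq> J \<longrightarrow> wcube I \<inter> wcube J = {}) \<and>
     (\<Union>I\<in>W. wcube I) = \<Omega> \<and>
     (\<forall>I\<in>W. 4 * diameter (wcube I) \<le> setdist (wcube (wdilate 4 I)) (frontier \<Omega>) \<and>
             setdist (wcube (wdilate 4 I)) (frontier \<Omega>) \<le> setdist (wcube I) (frontier \<Omega>) \<and>
             setdist (wcube I) (frontier \<Omega>) \<le> 40 * diameter (wcube I)) \<and>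
     (\<forall>I\<in>W. \<forall>J\<in>W. closure (wcube I) \<inter> closure (wcube J) \<noteq> {} \<longrightarrow>
        diameter (wcube I) / 4 \<le> diameter (wcube J) \<and>
        diameter (wcube J) \<le> 4 * diameter (wcube I))"

definition WQ :: "('a::euclidean_space \<times> real) set \<Rightarrow> real \<Rightarrow> real \<Rightarrow> int \<times> 'a set \<Rightarrow> ('a \<times> real) set" where
  "WQ W \<eta> K Q = {I\<in>W. \<eta> powr (1/4) * dlen Q \<le> snd I \<and> snd I \<le> sqrt K * dlen Q \<and>
                        setdist (wcube I) (snd Q) \<le> sqrt K * dlen Q}"

end

theory Submission
  imports Defs
begin

(* Every Whitney cube I of W_Q' has side h comparable to l(Q'), and H^n(bd I) <= A h^n by covering
   the faces with small cells. The cubes of W_Q' are disjoint and lie in a cube of side comparable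
   to l(Q'), so comparing volumes bounds the sum over W_Q' by a multiple of l(Q')^n.
   The subcubes Q' of Q of generation j below Q that lie within kappa l(Q') of the rest of the
   boundary contain disjoint surface balls of measure about (2^-j l(Q))^d, all lying in the
   boundary layer of Q of width about 2^-j l(Q). By the thin boundary property that layer has
   measure at most a multiple of 2^(-j gamma) l(Q)^d, so there are at most C 2^(j(d - gamma)) such
   Q'. Summing over j leaves the geometric series l(Q)^n sum_j 2^(j(d - gamma - n)), which
   converges because d <= n and gamma > 0. *)

section \<open>Hausdorff outer measure\<close>

lemma INF_add_const_ennreal:
  fixes f :: "'b \<Rightarrow> ennreal"
  shows "(INF i\<in>I. f i + c) = (INF i\<in>I. f i) + c"
proof (cases "I = {}")
  case False
  then show ?thesis
    using continuous_at_Inf_mono[of "\<lambda>x. x + c" "f ` I"]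
      continuous_add[of "at_right (Inf (f ` I))" "\<lambda>x. x" "\<lambda>x. c"]
    by (auto simp: mono_def image_comp)
qed simp

lemma INF_const_add_ennreal:
  fixes f :: "'b \<Rightarrow> ennreal"
  shows "(INF i\<in>I. c + f i) = c + (INF i\<in>I. f i)"
  using INF_add_const_ennreal[of f c I] by (simp add: ac_simps)

lemma hausdorff_norm_nonneg: "0 \<le> s \<Longrightarrow> 0 \<le> hausdorff_norm s"
  unfolding hausdorff_norm_def
  by (intro divide_nonneg_pos mult_pos_pos) (auto intro: Gamma_real_pos)

lemma hausdorff_pre_le_cover:
  assumes "A \<subseteq> (\<Union>i. f i)" "\<And>i. bounded (f i)" "\<And>i. diameter (f i) \<le> \<delta>"
  shows "hausdorff_pre s \<delta> A \<le> (\<Sum>i. ennreal (hausdorff_norm s * diameter (f i) powr s))"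
  unfolding hausdorff_pre_def by (rule INF_lower) (use assms in auto)

lemma hausdorff_pre_le_finite_cover:
  assumes "finite X" "A \<subseteq> (\<Union>t\<in>X. C t)" "\<And>t. t \<in> X \<Longrightarrow> bounded (C t)"
    and "\<And>t. t \<in> X \<Longrightarrow> diameter (C t) \<le> \<delta>" "0 \<le> \<delta>"
  shows "hausdorff_pre s \<delta> A \<le> (\<Sum>t\<in>X. ennreal (hausdorff_norm s * diameter (C t) powr s))"
proof -
  obtain e where e: "bij_betw e {..<card X} X"
    using ex_bij_betw_nat_finite[OF assms(1)] atLeast0LessThan by metis
  define f where "f k = (if k < card X then C (e k) else {})" for k
  have "A \<subseteq> (\<Union>k. f k)"
  proof
    fix x assume "x \<in> A"
    then obtain t where "t \<in> X" "x \<in> C t" using assms(2) by blast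
    moreover obtain k where "k < card X" "e k = t"
      using e \<open>t \<in> X\<close> by (metis bij_betw_iff_bijections lessThan_iff)
    ultimately show "x \<in> (\<Union>k. f k)" by (auto simp: f_def)
  qed
  moreover have "bounded (f k)" "diameter (f k) \<le> \<delta>" for k
    using e assms(3-5) by (auto simp: f_def bij_betw_def)
  ultimately have "hausdorff_pre s \<delta> A \<le> (\<Sum>k. ennreal (hausdorff_norm s * diameter (f k) powr s))"
    by (rule hausdorff_pre_le_cover)
  also have "\<dots> = (\<Sum>k<card X. ennreal (hausdorff_norm s * diameter (C (e k)) powr s))"
    by (subst suminf_finite[of "{..<card X}"]) (auto simp: f_def)
  also have "\<dots> = (\<Sum>t\<in>X. ennreal (hausdorff_norm s * diameter (C t) powr s))"
    using sum.reindex_bij_betw[OF e] by simp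
  finally show ?thesis .
qed

lemma hausdorff_pre_mono: "A \<subseteq> B \<Longrightarrow> hausdorff_pre s \<delta> A \<le> hausdorff_pre s \<delta> B"
  unfolding hausdorff_pre_def by (rule INF_superset_mono) auto

lemma hausdorff_pre_antimono: "\<delta> \<le> \<delta>' \<Longrightarrow> hausdorff_pre s \<delta>' A \<le> hausdorff_pre s \<delta> A"
  unfolding hausdorff_pre_def by (rule INF_superset_mono) (auto intro: order_trans)

lemma hausdorff_pre_le_hausdorff: "0 < \<delta> \<Longrightarrow> hausdorff_pre s \<delta> A \<le> hausdorff s A"
  unfolding hausdorff_def by (rule SUP_upper) auto

lemma hausdorff_leI: "(\<And>\<delta>. 0 < \<delta> \<Longrightarrow> hausdorff_pre s \<delta> A \<le> b) \<Longrightarrow> hausdorff s A \<le> b"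
  unfolding hausdorff_def by (rule SUP_least) auto

lemma hausdorff_mono: "A \<subseteq> B \<Longrightarrow> hausdorff s A \<le> hausdorff s B"
  unfolding hausdorff_def by (intro SUP_mono) (auto intro: hausdorff_pre_mono)

lemma hausdorff_empty: "hausdorff s ({} :: 'a::euclidean_space set) = 0"
proof -
  have "hausdorff_pre s \<delta> ({} :: 'a set) \<le> 0" if "0 < \<delta>" for \<delta>
    using hausdorff_pre_le_cover[of "{}" "\<lambda>_. {} :: 'a set" \<delta> s] that by simp
  then show ?thesis by (intro antisym hausdorff_leI) auto
qed

lemma suminf_interleave_ennreal:
  fixes f g :: "nat \<Rightarrow> ennreal"
  shows "(\<Sum>i. if even i then f (i div 2) else g (i div 2)) = suminf f + suminf g"
proof -
  let ?h = "\<lambda>i. if even i then f (i div 2) else g (i div 2)"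
  have "(\<lambda>k. \<Sum>i\<in>{k * 2..<k * 2 + 2}. ?h i) sums (\<Sum>i. ?h i)"
    by (intro sums_group summable_sums summableI) simp
  moreover have "{k * 2..<k * 2 + 2} = {2 * k, 2 * k + 1}" for k :: nat by auto
  ultimately have "(\<Sum>i. ?h i) = (\<Sum>k. f k + g k)" by (simp add: sums_iff)
  also have "\<dots> = suminf f + suminf g" by (rule suminf_add[symmetric]) auto
  finally show ?thesis .
qed

lemma hausdorff_pre_Un_le:
  "hausdorff_pre s \<delta> (A \<union> B) \<le> hausdorff_pre s \<delta> A + hausdorff_pre s \<delta> B"
proof -
  let ?C = "\<lambda>E. {f :: nat \<Rightarrow> 'a set. E \<subseteq> (\<Union>i. f i) \<and> (\<forall>i. bounded (f i) \<and> diameter (f i) \<le> \<delta>)}"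
  let ?t = "\<lambda>X. ennreal (hausdorff_norm s * diameter X powr s)"
  have "hausdorff_pre s \<delta> (A \<union> B) \<le> (\<Sum>i. ?t (f i)) + (\<Sum>i. ?t (g i))"
    if f: "f \<in> ?C A" and g: "g \<in> ?C B" for f g
  proof -
    define h where "h i = (if even i then f (i div 2) else g (i div 2))" for i
    have "A \<subseteq> (\<Union>i. h (2 * i))" "B \<subseteq> (\<Union>i. h (2 * i + 1))"
      using f g by (auto simp: h_def)
    then have "A \<union> B \<subseteq> (\<Union>i. h i)" by blast
    moreover have "bounded (h i)" "diameter (h i) \<le> \<delta>" for i
      using f g by (auto simp: h_def)
    ultimately have "hausdorff_pre s \<delta> (A \<union> B) \<le> (\<Sum>i. ?t (h i))"
      by (rule hausdorff_pre_le_cover)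
    also have "(\<Sum>i. ?t (h i)) = (\<Sum>i. if even i then ?t (f (i div 2)) else ?t (g (i div 2)))"
      by (rule suminf_cong) (simp add: h_def)
    also have "\<dots> = (\<Sum>i. ?t (f i)) + (\<Sum>i. ?t (g i))" by (rule suminf_interleave_ennreal)
    finally show ?thesis .
  qed
  then have "hausdorff_pre s \<delta> (A \<union> B) \<le> (INF f\<in>?C A. INF g\<in>?C B. (\<Sum>i. ?t (f i)) + (\<Sum>i. ?t (g i)))"
    by (intro INF_greatest)
  also have "\<dots> = hausdorff_pre s \<delta> A + hausdorff_pre s \<delta> B"
    unfolding hausdorff_pre_def INF_const_add_ennreal INF_add_const_ennreal ..
  finally show ?thesis .
qed

lemma hausdorff_Un_le: "hausdorff s (A \<union> B) \<le> hausdorff s A + hausdorff s B"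
proof (rule hausdorff_leI)
  fix \<delta> :: real assume "0 < \<delta>"
  then show "hausdorff_pre s \<delta> (A \<union> B) \<le> hausdorff s A + hausdorff s B"
    using hausdorff_pre_Un_le[of s \<delta> A B]
    by (meson add_mono hausdorff_pre_le_hausdorff order_trans)
qed

lemma hausdorff_Union_le: "finite F \<Longrightarrow> hausdorff s (\<Union>F) \<le> (\<Sum>P\<in>F. hausdorff s P)"
proof (induction F rule: finite_induct)
  case (insert P F)
  then show ?case
    using hausdorff_Un_le[of s P "\<Union>F"] by (simp add: add_left_mono order_trans)
qed (simp add: hausdorff_empty)

text \<open>A cover by sets of diameter less than the separation splits into covers of the two parts.\<close>
lemma hausdorff_pre_Un_separated:
  assumes "0 \<le> \<delta>" "\<delta> < e" and sep: "\<And>x y. x \<in> A \<Longrightarrow> y \<in> B \<Longrightarrow> e \<le> dist x y"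
  shows "hausdorff_pre s \<delta> A + hausdorff_pre s \<delta> B \<le> hausdorff_pre s \<delta> (A \<union> B)"
  unfolding hausdorff_pre_def[of s \<delta> "A \<union> B"]
proof (rule INF_greatest, clarify)
  fix h :: "nat \<Rightarrow> 'a set"
  assume cov: "A \<union> B \<subseteq> (\<Union>i. h i)" and h: "\<forall>i. bounded (h i) \<and> diameter (h i) \<le> \<delta>"
  define f where "f i = (if h i \<inter> A = {} then {} else h i)" for i
  define g where "g i = (if h i \<inter> B = {} then {} else h i)" for i
  let ?t = "\<lambda>X. ennreal (hausdorff_norm s * diameter X powr s)"
  have meets_one: "h i \<inter> A = {} \<or> h i \<inter> B = {}" for i
  proof (rule ccontr)
    assume "\<not> ?thesis"
    then obtain x y where "x \<in> h i" "x \<in> A" "y \<in> h i" "y \<in> B" by blast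
    then have "dist x y \<le> \<delta>" using h diameter_bounded_bound order_trans by blast
    then show False using sep[OF \<open>x \<in> A\<close> \<open>y \<in> B\<close>] \<open>\<delta> < e\<close> by linarith
  qed
  have "A \<subseteq> (\<Union>i. f i)" "B \<subseteq> (\<Union>i. g i)"
    using cov by (auto simp: f_def g_def) blast+
  then have "hausdorff_pre s \<delta> A + hausdorff_pre s \<delta> B \<le> (\<Sum>i. ?t (f i)) + (\<Sum>i. ?t (g i))"
    by (intro add_mono hausdorff_pre_le_cover) (use h \<open>0 \<le> \<delta>\<close> in \<open>auto simp: f_def g_def\<close>)
  also have "\<dots> = (\<Sum>i. ?t (f i) + ?t (g i))" by (rule suminf_add) auto
  also have "\<dots> \<le> (\<Sum>i. ?t (h i))"
    by (intro suminf_le) (use meets_one in \<open>auto simp: f_def g_def\<close>)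
  finally show "hausdorff_pre s \<delta> A + hausdorff_pre s \<delta> B \<le> (\<Sum>i. ?t (h i))" .
qed

lemma hausdorff_Un_separated:
  assumes "0 < e" and sep: "\<And>x y. x \<in> A \<Longrightarrow> y \<in> B \<Longrightarrow> e \<le> dist x y"
  shows "hausdorff s A + hausdorff s B \<le> hausdorff s (A \<union> B)"
proof -
  have "hausdorff_pre s \<delta>1 A + hausdorff_pre s \<delta>2 B \<le> hausdorff s (A \<union> B)"
    if "0 < \<delta>1" "0 < \<delta>2" for \<delta>1 \<delta>2
  proof -
    define \<delta> where "\<delta> = min (min \<delta>1 \<delta>2) (e / 2)"
    have \<delta>: "0 < \<delta>" "\<delta> < e" "\<delta> \<le> \<delta>1" "\<delta> \<le> \<delta>2" using that \<open>0 < e\<close> by (auto simp: \<delta>_def)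
    have "hausdorff_pre s \<delta>1 A + hausdorff_pre s \<delta>2 B \<le> hausdorff_pre s \<delta> A + hausdorff_pre s \<delta> B"
      using \<delta> by (intro add_mono hausdorff_pre_antimono)
    also have "\<dots> \<le> hausdorff_pre s \<delta> (A \<union> B)"
      using \<delta> sep by (intro hausdorff_pre_Un_separated) auto
    also have "\<dots> \<le> hausdorff s (A \<union> B)" using \<delta> by (intro hausdorff_pre_le_hausdorff)
    finally show ?thesis .
  qed
  then have "(SUP \<delta>1\<in>{0<..}. SUP \<delta>2\<in>{0<..}. hausdorff_pre s \<delta>1 A + hausdorff_pre s \<delta>2 B)
      \<le> hausdorff s (A \<union> B)"
    by (intro SUP_least) auto
  moreover have "(SUP \<delta>1\<in>{0<..}. SUP \<delta>2\<in>{0<..}. hausdorff_pre s \<delta>1 A + hausdorff_pre s \<delta>2 B)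
      = hausdorff s A + hausdorff s B"
    unfolding hausdorff_def
    by (subst ennreal_SUP_add_left[symmetric], force) (subst ennreal_SUP_add_right, force, rule refl)
  ultimately show ?thesis by simp
qed

lemma sum_hausdorff_le_UNION_separated:
  assumes "finite X" "0 < e"
    and sep: "\<And>i j x y. i \<in> X \<Longrightarrow> j \<in> X \<Longrightarrow> i \<noteq> j \<Longrightarrow> x \<in> f i \<Longrightarrow> y \<in> f j \<Longrightarrow> e \<le> dist x y"
  shows "(\<Sum>i\<in>X. hausdorff s (f i)) \<le> hausdorff s (\<Union>i\<in>X. f i)"
  using assms(1) sep
proof (induction X rule: finite_induct)
  case (insert i X)
  have "(\<Sum>i\<in>insert i X. hausdorff s (f i)) = hausdorff s (f i) + (\<Sum>i\<in>X. hausdorff s (f i))"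
    using insert by simp
  also have "\<dots> \<le> hausdorff s (f i) + hausdorff s (\<Union>i\<in>X. f i)"
    using insert.IH insert.prems by (intro add_left_mono) blast
  also have "\<dots> \<le> hausdorff s (f i \<union> (\<Union>i\<in>X. f i))"
    using insert by (intro hausdorff_Un_separated[OF \<open>0 < e\<close>]) blast
  finally show ?case by simp
qed simp

section \<open>The boundary of a cube\<close>

lemma box_subset_wcube: "box a (a + h *\<^sub>R One) \<subseteq> wcube (a, h)"
  by (auto simp: wcube_def mem_box inner_simps less_imp_le)

lemma frontier_wcube_subset: "frontier (wcube (a, h)) \<subseteq> cbox a (a + h *\<^sub>R One) - box a (a + h *\<^sub>R One)"
proof -
  have "wcube (a, h) \<subseteq> cbox a (a + h *\<^sub>R One)"
    by (auto simp: wcube_def mem_box inner_simps less_imp_le)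
  then have "closure (wcube (a, h)) \<subseteq> cbox a (a + h *\<^sub>R One)"
    by (intro closure_minimal) auto
  moreover have "box a (a + h *\<^sub>R One) \<subseteq> interior (wcube (a, h))"
    using box_subset_wcube by (intro interior_maximal) auto
  ultimately show ?thesis unfolding frontier_def by auto
qed

lemma grid_interval_exists:
  fixes u h :: real
  assumes "0 \<le> u" "u \<le> h" "0 < h" "1 \<le> m"
  shows "\<exists>k<m. real k * h / m \<le> u \<and> u \<le> (real k + 1) * h / m"
proof -
  define t where "t = u * m / h"
  have t: "0 \<le> t" "t \<le> m" using assms by (auto simp: t_def field_simps)
  have u: "u = t * h / m" using assms by (simp add: t_def)
  obtain k where "k < m" "real k \<le> t" "t \<le> real k + 1"
  proof (cases "t < m")
    case True
    then show ?thesis using t by (intro that[of "nat \<lfloor>t\<rfloor>"]) (auto simp: nat_less_iff floor_less_iff)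
  next
    case False
    then show ?thesis using t assms by (intro that[of "m - 1"]) (auto simp: of_nat_diff)
  qed
  then show ?thesis using assms unfolding u by (auto intro!: exI[of _ k] divide_right_mono mult_right_mono)
qed

text \<open>The face of the cube normal to the basis vector i (the far face if s, the near one
  otherwise) is cut into a grid of m^n cells; g gives the grid position in the other coordinates.\<close>
definition face_cell :: "'a::euclidean_space \<Rightarrow> real \<Rightarrow> nat \<Rightarrow> 'a \<times> bool \<times> ('a \<Rightarrow> nat) \<Rightarrow> 'a set" where
  "face_cell a h m = (\<lambda>(i, s, g). {x. x \<bullet> i = a \<bullet> i + (if s then h else 0) \<and>
      (\<forall>j\<in>Basis - {i}. a \<bullet> j + real (g j) * h / m \<le> x \<bullet> j \<and> x \<bullet> j \<le> a \<bullet> j + (real (g j) + 1) * h / m)})"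

definition face_cell_index :: "nat \<Rightarrow> ('a::euclidean_space \<times> bool \<times> ('a \<Rightarrow> nat)) set" where
  "face_cell_index m = Sigma Basis (\<lambda>i. UNIV \<times> PiE (Basis - {i}) (\<lambda>_. {..<m}))"

lemma finite_face_cell_index: "finite (face_cell_index m)"
  unfolding face_cell_index_def by (intro finite_SigmaI finite_cartesian_product finite_PiE) auto

lemma card_face_cell_index:
  assumes "DIM('a::euclidean_space) = Suc n"
  shows "card (face_cell_index m :: ('a \<times> bool \<times> ('a \<Rightarrow> nat)) set) = Suc n * (2 * m ^ n)"
proof -
  have "card (Basis - {i} :: 'a set) = n" if "i \<in> Basis" for i
    using assms that by (simp add: card_Diff_singleton)
  then have "card (face_cell_index m :: ('a \<times> bool \<times> ('a \<Rightarrow> nat)) set) = (\<Sum>i\<in>(Basis :: 'a set). 2 * m ^ n)"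
    unfolding face_cell_index_def
    by (subst card_SigmaI) (auto intro!: finite_PiE sum.cong simp: card_cartesian_product card_PiE)
  then show ?thesis using assms by simp
qed

lemma face_cell_dist:
  fixes i :: "'a::euclidean_space"
  assumes "DIM('a) = Suc n" "i \<in> Basis"
    and "x \<in> face_cell a h m (i, s, g)" "y \<in> face_cell a h m (i, s, g)"
  shows "dist x y \<le> real n * h / m"
proof -
  have "\<bar>(x - y) \<bullet> j\<bar> \<le> h / m" if "j \<in> Basis - {i}" for j
  proof -
    have "a \<bullet> j + real (g j) * h / m \<le> x \<bullet> j" "x \<bullet> j \<le> a \<bullet> j + (real (g j) * h / m + h / m)"
      "a \<bullet> j + real (g j) * h / m \<le> y \<bullet> j" "y \<bullet> j \<le> a \<bullet> j + (real (g j) * h / m + h / m)"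
      using assms(3,4) that by (auto simp: face_cell_def add_divide_distrib distrib_right)
    then show ?thesis unfolding inner_diff_left abs_le_iff by linarith
  qed
  have "(x - y) \<bullet> i = 0" using assms(3,4) by (auto simp: face_cell_def inner_simps)
  have "dist x y \<le> (\<Sum>j\<in>Basis. \<bar>(x - y) \<bullet> j\<bar>)" using norm_le_l1 by (simp add: dist_norm)
  also have "\<dots> = (\<Sum>j\<in>Basis - {i}. \<bar>(x - y) \<bullet> j\<bar>)"
    using assms(2) \<open>(x - y) \<bullet> i = 0\<close> by (simp add: sum.remove)
  also have "\<dots> \<le> (\<Sum>j\<in>Basis - {i}. h / m)" by (rule sum_mono) fact
  also have "\<dots> = real n * h / m" using assms(1,2) by (simp add: card_Diff_singleton)
  finally show ?thesis .
qed

lemma face_cell_bounded_diameter: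
  assumes "DIM('a::euclidean_space) = Suc n" "i \<in> Basis" "0 \<le> h"
  shows "bounded (face_cell (a::'a) h m (i, s, g))" "diameter (face_cell a h m (i, s, g)) \<le> real n * h / m"
proof -
  show "bounded (face_cell a h m (i, s, g))"
    using face_cell_dist[OF assms(1,2)] unfolding bounded_def by blast
  show "diameter (face_cell a h m (i, s, g)) \<le> real n * h / m"
    using face_cell_dist[OF assms(1,2)] assms(3) by (intro diameter_le) (auto simp: dist_norm)
qed

lemma frontier_wcube_subset_face_cells:
  assumes "0 < h" "1 \<le> m"
  shows "frontier (wcube (a, h)) \<subseteq> (\<Union>t\<in>face_cell_index m. face_cell a h m t)"
proof
  fix x assume "x \<in> frontier (wcube (a, h))"
  then have x: "x \<in> cbox a (a + h *\<^sub>R One)" "x \<notin> box a (a + h *\<^sub>R One)"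
    using frontier_wcube_subset by blast+
  then have bounds: "\<forall>j\<in>Basis. 0 \<le> x \<bullet> j - a \<bullet> j \<and> x \<bullet> j - a \<bullet> j \<le> h"
    by (auto simp: mem_box inner_simps)
  from x obtain i where i: "i \<in> Basis" "x \<bullet> i = a \<bullet> i \<or> x \<bullet> i = a \<bullet> i + h"
    by (force simp: mem_box inner_simps)
  have "\<forall>j\<in>Basis - {i}. \<exists>k<m. real k * h / m \<le> x \<bullet> j - a \<bullet> j \<and> x \<bullet> j - a \<bullet> j \<le> (real k + 1) * h / m"
    using grid_interval_exists[OF _ _ assms] bounds by blast
  then obtain g where g: "\<forall>j\<in>Basis - {i}. g j < m \<and>
      real (g j) * h / m \<le> x \<bullet> j - a \<bullet> j \<and> x \<bullet> j - a \<bullet> j \<le> (real (g j) + 1) * h / m"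
    by metis
  let ?t = "(i, x \<bullet> i \<noteq> a \<bullet> i, restrict g (Basis - {i}))"
  have "?t \<in> face_cell_index m" using i g by (auto simp: face_cell_index_def)
  moreover have "x \<in> face_cell a h m ?t"
    using i g by (auto simp: face_cell_def algebra_simps)
  ultimately show "x \<in> (\<Union>t\<in>face_cell_index m. face_cell a h m t)" by blast
qed

definition cube_frontier_const :: "nat \<Rightarrow> real" where
  "cube_frontier_const n = 2 * real (Suc n) * hausdorff_norm (real n) * real n ^ n"

lemma cube_frontier_const_nonneg: "0 \<le> cube_frontier_const n"
  unfolding cube_frontier_const_def using hausdorff_norm_nonneg[of "real n"] by simp

lemma hausdorff_frontier_wcube_le:
  assumes dim: "DIM('a::euclidean_space) = Suc n" and "1 \<le> n" "0 < h"
  shows "hausdorff (real n) (frontier (wcube ((a::'a), h))) \<le> ennreal (cube_frontier_const n * h ^ n)"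
proof (rule hausdorff_leI)
  fix \<delta> :: real assume "0 < \<delta>"
  define m :: nat where "m = nat \<lceil>real n * h / \<delta>\<rceil> + 1"
  have "real n * h / \<delta> \<le> m" unfolding m_def by linarith
  then have m: "1 \<le> m" "real n * h / m \<le> \<delta>"
    using \<open>0 < \<delta>\<close> by (auto simp: m_def field_simps)
  let ?X = "face_cell_index m :: ('a \<times> bool \<times> ('a \<Rightarrow> nat)) set"
  have cell: "bounded (face_cell a h m t)" "diameter (face_cell a h m t) \<le> real n * h / m" if "t \<in> ?X" for t
    using that face_cell_bounded_diameter[OF dim] \<open>0 < h\<close> by (auto simp: face_cell_index_def)
  have "hausdorff_pre (real n) \<delta> (frontier (wcube (a, h)))
      \<le> (\<Sum>t\<in>?X. ennreal (hausdorff_norm n * diameter (face_cell a h m t) powr n))"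
    using cell \<open>0 < \<delta>\<close>
    by (intro hausdorff_pre_le_finite_cover finite_face_cell_index frontier_wcube_subset_face_cells
        \<open>0 < h\<close> m(1)) (auto intro: order_trans[OF _ m(2)])
  also have "\<dots> \<le> (\<Sum>t\<in>?X. ennreal (hausdorff_norm n * (real n * h / m) ^ n))"
  proof (intro sum_mono ennreal_leI mult_left_mono hausdorff_norm_nonneg)
    fix t assume "t \<in> ?X"
    then have "diameter (face_cell a h m t) powr n \<le> (real n * h / m) powr n"
      using cell by (intro powr_mono2) (auto simp: diameter_ge_0)
    then show "diameter (face_cell a h m t) powr n \<le> (real n * h / m) ^ n"
      using assms \<open>1 \<le> m\<close> by (simp add: powr_realpow)
  qed simp
  also have "\<dots> = ennreal (real (card ?X) * (hausdorff_norm n * (real n * h / m) ^ n))"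
    using hausdorff_norm_nonneg[of n] \<open>0 < h\<close>
    by (simp add: ennreal_of_nat_eq_real_of_nat ennreal_mult)
  also have "real (card ?X) * (hausdorff_norm n * (real n * h / m) ^ n) = cube_frontier_const n * h ^ n"
    using \<open>1 \<le> m\<close> unfolding card_face_cell_index[OF dim] cube_frontier_const_def
    by (simp add: power_divide power_mult_distrib field_simps)
  finally show "hausdorff_pre (real n) \<delta> (frontier (wcube (a, h))) \<le> ennreal (cube_frontier_const n * h ^ n)" .
qed

section \<open>Whitney cubes attached to a dyadic cube\<close>

lemma dist_le_in_wcube:
  fixes a :: "'a::euclidean_space"
  assumes "DIM('a) = Suc n" "x \<in> wcube (a, h)" "y \<in> wcube (a, h)"
  shows "dist x y \<le> real (Suc n) * h"
proof -
  have "\<bar>(x - y) \<bullet> b\<bar> \<le> h" if "b \<in> Basis" for b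
  proof -
    have "a \<bullet> b < x \<bullet> b" "x \<bullet> b \<le> a \<bullet> b + h" "a \<bullet> b < y \<bullet> b" "y \<bullet> b \<le> a \<bullet> b + h"
      using assms(2,3) that by (auto simp: wcube_def)
    then show ?thesis by (simp add: inner_diff_left abs_le_iff)
  qed
  then have "(\<Sum>b\<in>Basis. \<bar>(x - y) \<bullet> b\<bar>) \<le> (\<Sum>b\<in>(Basis :: 'a set). h)" by (rule sum_mono)
  then show ?thesis using norm_le_l1[of "x - y"] assms(1) by (simp add: dist_norm)
qed

lemma wcube_subset_ball_if_setdist_less:
  fixes I :: "'a::euclidean_space \<times> real"
  assumes "DIM('a) = Suc n" "0 < snd I" "P \<subseteq> ball z r" "P \<noteq> {}" "setdist (wcube I) P < t"
  shows "wcube I \<subseteq> ball z (r + t + real (Suc n) * snd I)"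
proof
  obtain a h where I: "I = (a, h)" by fastforce
  have "a + h *\<^sub>R One \<in> wcube I" using assms(2) by (auto simp: I wcube_def inner_simps)
  then obtain p q where pq: "p \<in> wcube I" "q \<in> P" "dist p q < t"
    using setdist_ltE[OF assms(5) _ assms(4)] by blast
  fix y assume "y \<in> wcube I"
  then have "dist y p \<le> real (Suc n) * snd I" using dist_le_in_wcube[OF assms(1)] pq(1) by (simp add: I)
  moreover have "dist z q < r" using assms(3) pq(2) by auto
  ultimately show "y \<in> ball z (r + t + real (Suc n) * snd I)"
    using pq(3) dist_triangle[of z y q] dist_triangle[of q y p] by (simp add: dist_commute)
qed

lemma ball_subset_cbox: "ball z r \<subseteq> cbox (z - r *\<^sub>R One) (z + r *\<^sub>R One)"
proof
  fix y assume "y \<in> ball z r"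
  then have "\<bar>(y - z) \<bullet> b\<bar> < r" if "b \<in> Basis" for b
    using Basis_le_norm[OF that, of "y - z"] by (simp add: dist_norm norm_minus_commute)
  then show "y \<in> cbox (z - r *\<^sub>R One) (z + r *\<^sub>R One)"
    by (force simp: mem_box inner_simps abs_less_iff)
qed

lemma sum_side_power_le_if_disjoint_wcubes:
  fixes F :: "('a::euclidean_space \<times> real) set"
  assumes "finite F" "DIM('a) = Suc n" "0 \<le> r"
    and pos: "\<And>I. I \<in> F \<Longrightarrow> 0 < snd I"
    and disj: "\<And>I J. I \<in> F \<Longrightarrow> J \<in> F \<Longrightarrow> I \<noteq> J \<Longrightarrow> wcube I \<inter> wcube J = {}"
    and sub: "\<And>I. I \<in> F \<Longrightarrow> wcube I \<subseteq> cbox (z - r *\<^sub>R One) (z + r *\<^sub>R One)"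
  shows "(\<Sum>I\<in>F. snd I ^ Suc n) \<le> (2 * r) ^ Suc n"
proof -
  let ?B = "\<lambda>I. box (fst I) (fst I + snd I *\<^sub>R One)"
  have B_wcube: "?B I \<subseteq> wcube I" for I using box_subset_wcube[of "fst I" "snd I"] by simp
  have "(\<Sum>I\<in>F. snd I ^ Suc n) = (\<Sum>I\<in>F. measure lborel (?B I))"
  proof (rule sum.cong[OF refl])
    fix I assume "I \<in> F"
    then have "measure lborel (?B I) = (\<Prod>b\<in>(Basis :: 'a set). snd I)"
      using pos[OF \<open>I \<in> F\<close>] by (subst measure_lborel_box) (auto simp: inner_simps)
    then show "snd I ^ Suc n = measure lborel (?B I)" using assms(2) by simp
  qed
  also have "\<dots> = measure lborel (\<Union>I\<in>F. ?B I)"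
  proof (rule measure_finite_Union[symmetric])
    show "disjoint_family_on ?B F"
      unfolding disjoint_family_on_def using disj B_wcube by blast
  qed (use assms(1) emeasure_lborel_box_finite in \<open>auto simp: less_top\<close>)
  also have "\<dots> \<le> measure lborel (cbox (z - r *\<^sub>R One) (z + r *\<^sub>R One))"
  proof (rule measure_mono_fmeasurable)
    show "(\<Union>I\<in>F. ?B I) \<subseteq> cbox (z - r *\<^sub>R One) (z + r *\<^sub>R One)" using sub B_wcube by blast
  qed (use assms(1) in \<open>auto intro!: sets.finite_UN\<close>)
  also have "\<dots> = (2 * r) ^ Suc n"
    using \<open>0 \<le> r\<close> assms(2) by (simp add: measure_lborel_cbox inner_simps)
  finally show ?thesis .
qed

lemma whitney_positive_disjoint:
  assumes "whitney \<Omega> W"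
  shows "\<forall>I\<in>W. 0 < snd I" "\<forall>I\<in>W. \<forall>J\<in>W. I \<noteq> J \<longrightarrow> wcube I \<inter> wcube J = {}"
  using assms unfolding whitney_def by simp_all

definition WQ_radius :: "nat \<Rightarrow> real \<Rightarrow> real \<Rightarrow> real" where
  "WQ_radius n C1 K = C1 + sqrt K + 1 + real (Suc n) * sqrt K"

lemma wcube_subset_cbox_if_WQ:
  fixes I :: "'a::euclidean_space \<times> real"
  assumes dim: "DIM('a) = Suc n" and "I \<in> WQ W \<eta> K Q" "0 < snd I"
    and Q: "snd Q \<subseteq> ball z (C1 * dlen Q)" "snd Q \<noteq> {}"
  shows "wcube I \<subseteq> cbox (z - (WQ_radius n C1 K * dlen Q) *\<^sub>R One) (z + (WQ_radius n C1 K * dlen Q) *\<^sub>R One)"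
proof -
  define l where "l = dlen Q"
  have "0 < l" by (simp add: l_def dlen_def)
  then have I: "snd I \<le> sqrt K * l" "setdist (wcube I) (snd Q) < sqrt K * l + l"
    using assms(2) by (auto simp: WQ_def l_def)
  have "wcube I \<subseteq> ball z (C1 * l + (sqrt K * l + l) + real (Suc n) * snd I)"
    using wcube_subset_ball_if_setdist_less[OF dim assms(3) Q(1)[folded l_def] Q(2) I(2)] .
  also have "\<dots> \<subseteq> ball z (WQ_radius n C1 K * l)"
  proof (rule subset_ball)
    have "real (Suc n) * snd I \<le> real (Suc n) * (sqrt K * l)"
      using I(1) by (intro mult_left_mono) auto
    then show "C1 * l + (sqrt K * l + l) + real (Suc n) * snd I \<le> WQ_radius n C1 K * l"
      by (simp add: WQ_radius_def algebra_simps)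
  qed
  also have "\<dots> \<subseteq> cbox (z - (WQ_radius n C1 K * l) *\<^sub>R One) (z + (WQ_radius n C1 K * l) *\<^sub>R One)"
    by (rule ball_subset_cbox)
  finally show ?thesis unfolding l_def .
qed

definition WQ_frontier_const :: "nat \<Rightarrow> real \<Rightarrow> real \<Rightarrow> real \<Rightarrow> real" where
  "WQ_frontier_const n C1 \<eta> K = cube_frontier_const n * (2 * WQ_radius n C1 K) ^ Suc n / \<eta> powr (1/4)"

lemma WQ_frontier_const_nonneg: "0 \<le> C1 \<Longrightarrow> 0 \<le> K \<Longrightarrow> 0 \<le> WQ_frontier_const n C1 \<eta> K"
  using cube_frontier_const_nonneg[of n] by (simp add: WQ_frontier_const_def WQ_radius_def)

text \<open>A cube of side h in WQ W eta K Q has h >= eta^(1/4) l(Q), so h^n <= h^(n+1) / (eta^(1/4) l(Q)),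
  and the sum of h^(n+1) is bounded by volume comparison.\<close>
lemma WQ_frontier_sum_le:
  fixes W :: "('a::euclidean_space \<times> real) set"
  assumes dim: "DIM('a) = Suc n" and "1 \<le> n" "0 < \<eta>" "0 \<le> K" "0 \<le> C1"
    and pos: "\<forall>I\<in>W. 0 < snd I"
    and disj: "\<forall>I\<in>W. \<forall>J\<in>W. I \<noteq> J \<longrightarrow> wcube I \<inter> wcube J = {}"
    and Q: "snd Q \<subseteq> ball z (C1 * dlen Q)" "snd Q \<noteq> {}"
  shows "(\<Sum>\<^sub>\<infinity>I\<in>WQ W \<eta> K Q. hausdorff (real n) (frontier (wcube I)))
     \<le> ennreal (WQ_frontier_const n C1 \<eta> K * dlen Q ^ n)"
proof (rule infsum_le_finite_sums)
  show "(\<lambda>I. hausdorff (real n) (frontier (wcube I))) summable_on WQ W \<eta> K Q"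
    by (rule nonneg_summable_on_complete) auto
  fix F assume F: "finite F" "F \<subseteq> WQ W \<eta> K Q"
  define l where "l = dlen Q"
  define R where "R = WQ_radius n C1 K"
  define A where "A = cube_frontier_const n"
  define e where "e = \<eta> powr (1/4) * l"
  have l: "0 < l" by (simp add: l_def dlen_def)
  have A: "0 \<le> A" by (simp add: A_def cube_frontier_const_nonneg)
  have e: "0 < e" using \<open>0 < \<eta>\<close> l by (simp add: e_def)
  have FW: "F \<subseteq> W" using F by (auto simp: WQ_def)
  have I: "0 < snd I" "e \<le> snd I" if "I \<in> F" for I
    using that F pos by (auto simp: WQ_def e_def l_def)
  have "(\<Sum>I\<in>F. hausdorff (real n) (frontier (wcube I))) \<le> (\<Sum>I\<in>F. ennreal (A * snd I ^ n))"
    using hausdorff_frontier_wcube_le[OF dim \<open>1 \<le> n\<close>] I(1) unfolding A_def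
    by (intro sum_mono) (metis prod.collapse)
  also have "\<dots> = ennreal (\<Sum>I\<in>F. A * snd I ^ n)"
    using I(1) A by (intro sum_ennreal mult_nonneg_nonneg zero_le_power) (auto intro: less_imp_le)
  also have "(\<Sum>I\<in>F. A * snd I ^ n) \<le> A / e * (\<Sum>I\<in>F. snd I ^ Suc n)"
    unfolding sum_distrib_left
  proof (rule sum_mono)
    fix I assume "I \<in> F"
    then have "snd I ^ n * e \<le> snd I ^ n * snd I" using I[OF \<open>I \<in> F\<close>] by (intro mult_left_mono) auto
    then show "A * snd I ^ n \<le> A / e * snd I ^ Suc n" using e A by (simp add: field_simps mult_left_mono)
  qed
  also have "\<dots> \<le> A / e * (2 * (R * l)) ^ Suc n"
  proof (intro mult_left_mono sum_side_power_le_if_disjoint_wcubes[OF F(1) dim])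
    show "wcube I \<subseteq> cbox (z - (R * l) *\<^sub>R One) (z + (R * l) *\<^sub>R One)" if "I \<in> F" for I
      unfolding R_def l_def using wcube_subset_cbox_if_WQ[OF dim _ I(1)[OF that] Q] F(2) that by blast
    show "wcube I \<inter> wcube J = {}" if "I \<in> F" "J \<in> F" "I \<noteq> J" for I J
      using that FW disj by blast
  qed (use I(1) A e \<open>0 \<le> K\<close> \<open>0 \<le> C1\<close> l in \<open>auto simp: R_def WQ_radius_def\<close>)
  also have "\<dots> = WQ_frontier_const n C1 \<eta> K * l ^ n"
  proof -
    have "(2 * (R * l)) ^ Suc n = (2 * R) ^ Suc n * l ^ n * l" by (simp add: power_mult_distrib mult_ac)
    moreover have "A / e * (X * l ^ n * l) = A * X / \<eta> powr (1/4) * l ^ n" for X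
      using l \<open>0 < \<eta>\<close> by (simp add: e_def field_simps)
    ultimately show ?thesis by (simp only: WQ_frontier_const_def A_def R_def)
  qed
  finally show "(\<Sum>I\<in>F. hausdorff (real n) (frontier (wcube I))) \<le> ennreal (WQ_frontier_const n C1 \<eta> K * dlen Q ^ n)"
    by (simp add: l_def ennreal_leI order_trans)
qed

section \<open>Dyadic cubes on an Ahlfors regular set\<close>

lemma near_singleton_if_near_subset_ball:
  assumes "x \<in> A" "A \<subseteq> ball z r" "near A B t"
  shows "near {x} B (t + 2 * r)"
proof -
  have "setdist {x} B - 2 * r \<le> setdist A B"
  proof (rule le_setdistI)
    fix a b assume "a \<in> A" "b \<in> B"
    then have "setdist {x} B \<le> dist x b" by (intro setdist_le_dist) auto
    also have "\<dots> \<le> dist x z + dist z a + dist a b"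
      using dist_triangle[of x b a] dist_triangle[of x a z] by linarith
    moreover have "dist x z < r" "dist z a < r"
      using assms(1,2) \<open>a \<in> A\<close> by (auto simp: dist_commute)
    ultimately show "setdist {x} B - 2 * r \<le> dist a b" by linarith
  qed (use assms(3) in \<open>auto simp: near_def\<close>)
  then show ?thesis using assms(3) by (auto simp: near_def)
qed

definition shrink_depth :: "real \<Rightarrow> real \<Rightarrow> nat" where
  "shrink_depth C1 c1 = (LEAST m. C1 * 2 powr (- real m) < c1)"

lemma shrink_depth: "0 < c1 \<Longrightarrow> C1 * 2 powr (- real (shrink_depth C1 c1)) < c1"
proof -
  assume "0 < c1"
  obtain m :: nat where "C1 / c1 < 2 ^ m" using real_arch_pow[of 2 "C1 / c1"] by auto
  then have "C1 * 2 powr (- real m) < c1"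
    using \<open>0 < c1\<close> by (simp add: powr_minus powr_realpow field_simps)
  then show ?thesis unfolding shrink_depth_def by (rule LeastI)
qed

definition cube_measure_const :: "nat \<Rightarrow> real \<Rightarrow> real \<Rightarrow> real \<Rightarrow> real \<Rightarrow> real" where
  "cube_measure_const N CA C1 c1 d =
     real N ^ shrink_depth C1 c1 * CA * (C1 * 2 powr (- real (shrink_depth C1 c1))) powr d"

definition thin_layer_const :: "real \<Rightarrow> real \<Rightarrow> real \<Rightarrow> real" where
  "thin_layer_const C1 c1 \<gamma> = C1 + c1 powr (- \<gamma>)"

lemma dyadic_systemD:
  assumes "dyadic_system d E L D c1 C1 N \<gamma>"
  shows "0 < c1" "c1 \<le> C1" "0 < \<gamma>" "L = UNIV \<or> (\<exists>k0. L = {k0..})"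
    and "\<And>k P. k \<in> L \<Longrightarrow> P \<in> D k \<Longrightarrow> P \<subseteq> E"
    and "\<And>k P P'. k \<in> L \<Longrightarrow> P \<in> D k \<Longrightarrow> P' \<in> D k \<Longrightarrow> P \<noteq> P' \<Longrightarrow> P \<inter> P' = {}"
    and "\<And>k P. k \<in> L \<Longrightarrow> P \<in> D k \<Longrightarrow> \<exists>F. F \<subseteq> D (k + 1) \<and> finite F \<and> card F \<le> N \<and> P = \<Union>F"
    and "\<And>k P \<rho>. k \<in> L \<Longrightarrow> P \<in> D k \<Longrightarrow> 0 < \<rho> \<Longrightarrow> \<rho> < c1 \<Longrightarrow>
        hausdorff d {x\<in>P. near {x} (E - P) (\<rho> * 2 powr (- real_of_int k))} \<le> ennreal (C1 * \<rho> powr \<gamma>) * hausdorff d P"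
  using assms unfolding dyadic_system_def by simp_all

lemma dyadic_system_ballE:
  assumes "dyadic_system d E L D c1 C1 N \<gamma>" "k \<in> L" "P \<in> D k"
  obtains z where "z \<in> E" "ball z (c1 * 2 powr (- real_of_int k)) \<inter> E \<subseteq> P"
    "P \<subseteq> ball z (C1 * 2 powr (- real_of_int k))"
proof -
  \<comment> \<open>In the definition the coercion is applied to - k, not to k.\<close>
  have "\<forall>k\<in>L. \<forall>Q\<in>D k. \<exists>z\<in>E. ball z (c1 * 2 powr real_of_int (- k)) \<inter> E \<subseteq> Q \<and>
      Q \<subseteq> ball z (C1 * 2 powr real_of_int (- k)) \<inter> E"
    using assms(1) unfolding dyadic_system_def by (elim conjE) assumption
  then obtain z where "z \<in> E" "ball z (c1 * 2 powr real_of_int (- k)) \<inter> E \<subseteq> P"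
    "P \<subseteq> ball z (C1 * 2 powr real_of_int (- k)) \<inter> E"
    using assms(2,3) by meson
  then show ?thesis using that by simp
qed

locale ADR_dyadic_system =
  fixes d CA :: real and E :: "'a::euclidean_space set" and L :: "int set"
    and D :: "int \<Rightarrow> 'a set set" and c1 C1 :: real and N :: nat and \<gamma> :: real
  assumes ADR: "ADR d CA E" and dyadic: "dyadic_system d E L D c1 C1 N \<gamma>"
begin

lemma constants: "0 < c1" "c1 \<le> C1" "0 < \<gamma>" "1 \<le> CA"
  using dyadic_systemD(1-3)[OF dyadic] ADR by (auto simp: ADR_def)

lemma ADR_bounds:
  assumes "x \<in> E" "0 < r" "below_diam E r"
  shows "ennreal (r powr d / CA) \<le> hausdorff d (ball x r \<inter> E)"
    and "hausdorff d (ball x r \<inter> E) \<le> ennreal (CA * r powr d)"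
  using ADR assms unfolding ADR_def by simp_all

lemma level_mono: "k \<in> L \<Longrightarrow> k \<le> k' \<Longrightarrow> k' \<in> L"
  using dyadic_systemD(4)[OF dyadic] by auto

lemmas cube_subset = dyadic_systemD(5)[OF dyadic]
  and cube_disjoint = dyadic_systemD(6)[OF dyadic]
  and cube_children = dyadic_systemD(7)[OF dyadic]
  and thin_boundary = dyadic_systemD(8)[OF dyadic]
  and cube_ballE = dyadic_system_ballE[OF dyadic]

lemma cube_subset_ball_dlen:
  assumes "Q \<in> dcubes L D"
  obtains z where "snd Q \<subseteq> ball z (C1 * dlen Q)" "snd Q \<noteq> {}"
proof -
  obtain k P where Q: "Q = (k, P)" "k \<in> L" "P \<in> D k" using assms by (auto simp: dcubes_def)
  obtain z where z: "z \<in> E" "ball z (c1 * dlen Q) \<inter> E \<subseteq> P" "P \<subseteq> ball z (C1 * dlen Q)"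
    by (rule cube_ballE[OF Q(2,3)]) (simp_all add: Q(1) dlen_def)
  have "z \<in> ball z (c1 * dlen Q) \<inter> E" using constants z(1) by (simp add: dlen_def)
  then have "z \<in> P" using z(2) by (rule rev_subsetD)
  then have "P \<noteq> {}" by blast
  then show ?thesis using that z(3) Q(1) by simp
qed

lemma cube_descendants:
  assumes "k \<in> L" "P \<in> D k"
  shows "\<exists>F. F \<subseteq> D (k + int m) \<and> finite F \<and> card F \<le> N ^ m \<and> P = \<Union>F"
proof (induction m)
  case 0
  show ?case using assms by (intro exI[of _ "{P}"]) auto
next
  case (Suc m)
  then obtain F where F: "F \<subseteq> D (k + int m)" "finite F" "card F \<le> N ^ m" "P = \<Union>F" by blast
  have "k + int m \<in> L" "k + int (Suc m) = k + int m + 1" using level_mono[OF assms(1)] by auto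
  then have "\<forall>Q\<in>F. \<exists>G. G \<subseteq> D (k + int (Suc m)) \<and> finite G \<and> card G \<le> N \<and> Q = \<Union>G"
    using cube_children F(1) by (metis subsetD)
  then obtain ch where ch: "\<forall>Q\<in>F. ch Q \<subseteq> D (k + int (Suc m)) \<and> finite (ch Q) \<and> card (ch Q) \<le> N \<and> Q = \<Union>(ch Q)"
    by metis
  have "card (\<Union>Q\<in>F. ch Q) \<le> (\<Sum>Q\<in>F. card (ch Q))" by (rule card_UN_le[OF F(2)])
  also have "\<dots> \<le> card F * N" using ch sum_bounded_above[of F "\<lambda>Q. card (ch Q)" N] by simp
  also have "\<dots> \<le> N ^ Suc m" using F(3) by (simp add: mult.commute)
  finally have "card (\<Union>Q\<in>F. ch Q) \<le> N ^ Suc m" .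
  moreover have "P = \<Union>(\<Union>Q\<in>F. ch Q)"
  proof -
    have "\<Union>(ch Q) = Q" if "Q \<in> F" for Q using ch that by simp
    then have "(\<Union>Q\<in>F. \<Union>(ch Q)) = \<Union>F" by simp
    moreover have "\<Union>(\<Union>Q\<in>F. ch Q) = (\<Union>Q\<in>F. \<Union>(ch Q))" by blast
    ultimately show ?thesis using F(4) by simp
  qed
  moreover have "(\<Union>Q\<in>F. ch Q) \<subseteq> D (k + int (Suc m))" "finite (\<Union>Q\<in>F. ch Q)"
    using ch F(2) by auto
  ultimately show ?case by blast
qed

text \<open>A cube other than E contains a ball of E of radius c1 2^-k, so the lower ADR bound
  applies below that radius.\<close>
lemma below_diam_if_proper_cube:
  assumes "k \<in> L" "P \<in> D k" "P \<noteq> E" "r < c1 * 2 powr (- real_of_int k)"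
  shows "below_diam E r"
proof (rule ccontr)
  assume "\<not> below_diam E r"
  then have "bounded E" "diameter E \<le> r" by (auto simp: below_diam_def)
  obtain z where z: "z \<in> E" "ball z (c1 * 2 powr (- real_of_int k)) \<inter> E \<subseteq> P"
    by (rule cube_ballE[OF assms(1,2)])
  have "x \<in> P" if "x \<in> E" for x
  proof -
    have "dist z x \<le> diameter E" by (rule diameter_bounded_bound[OF \<open>bounded E\<close> z(1) that])
    then have "x \<in> ball z (c1 * 2 powr (- real_of_int k)) \<inter> E" using \<open>diameter E \<le> r\<close> assms(4) that by simp
    then show ?thesis using z(2) by blast
  qed
  then show False using cube_subset[OF assms(1,2)] assms(3) by blast
qed

text \<open>Descend until the cubes have radius below c1 2^-k, where the upper ADR bound applies.\<close>
lemma hausdorff_cube_le: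
  assumes "k \<in> L" "P \<in> D k" "P \<noteq> E"
  shows "hausdorff d P \<le> ennreal (cube_measure_const N CA C1 c1 d * (2 powr (- real_of_int k)) powr d)"
proof -
  define m where "m = shrink_depth C1 c1"
  define r where "r = C1 * 2 powr (- real m) * 2 powr (- real_of_int k)"
  have "C1 * 2 powr (- real m) < c1" unfolding m_def using constants by (intro shrink_depth)
  then have r: "0 < r" "r < c1 * 2 powr (- real_of_int k)"
    using constants unfolding r_def by (simp_all add: mult_strict_right_mono)
  have r_level: "C1 * 2 powr (- real_of_int (k + int m)) = r"
    by (simp add: r_def powr_add[symmetric] algebra_simps)
  obtain F where F: "F \<subseteq> D (k + int m)" "finite F" "card F \<le> N ^ m" "P = \<Union>F"
    using cube_descendants[OF assms(1,2)] by blast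
  have "hausdorff d Q \<le> ennreal (CA * r powr d)" if "Q \<in> F" for Q
  proof -
    have Q: "k + int m \<in> L" "Q \<in> D (k + int m)" using level_mono[OF assms(1)] F(1) that by auto
    obtain z where "z \<in> E" "Q \<subseteq> ball z (C1 * 2 powr (- real_of_int (k + int m)))"
      by (rule cube_ballE[OF Q])
    then have "hausdorff d Q \<le> hausdorff d (ball z r \<inter> E)"
      using cube_subset[OF Q] r_level by (intro hausdorff_mono) auto
    also have "\<dots> \<le> ennreal (CA * r powr d)"
      by (rule ADR_bounds(2)[OF \<open>z \<in> E\<close> r(1) below_diam_if_proper_cube[OF assms r(2)]])
    finally show ?thesis .
  qed
  then have "hausdorff d P \<le> of_nat (card F) * ennreal (CA * r powr d)"
    unfolding F(4) using hausdorff_Union_le[OF F(2)] sum_bounded_above[of F "hausdorff d"]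
    by (meson order_trans)
  also have "\<dots> = ennreal (real (card F) * (CA * r powr d))"
    using constants by (simp add: ennreal_mult ennreal_of_nat_eq_real_of_nat)
  also have "\<dots> \<le> ennreal (real N ^ m * (CA * r powr d))"
    using F(3) constants by (intro ennreal_leI mult_right_mono) (simp_all flip: of_nat_power)
  also have "real N ^ m * (CA * r powr d) = cube_measure_const N CA C1 c1 d * (2 powr (- real_of_int k)) powr d"
    using constants by (simp add: cube_measure_const_def m_def r_def powr_mult)
  finally show ?thesis .
qed

lemma hausdorff_boundary_layer_le:
  assumes "k \<in> L" "P \<in> D k" "0 < \<rho>"
  shows "hausdorff d {x\<in>P. near {x} (E - P) (\<rho> * 2 powr (- real_of_int k))}
    \<le> ennreal (thin_layer_const C1 c1 \<gamma> * \<rho> powr \<gamma>) * hausdorff d P"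
proof (cases "\<rho> < c1")
  case True
  have "hausdorff d {x\<in>P. near {x} (E - P) (\<rho> * 2 powr (- real_of_int k))}
      \<le> ennreal (C1 * \<rho> powr \<gamma>) * hausdorff d P"
    by (rule thin_boundary[OF assms True])
  also have "\<dots> \<le> ennreal (thin_layer_const C1 c1 \<gamma> * \<rho> powr \<gamma>) * hausdorff d P"
    by (intro mult_right_mono ennreal_leI) (auto simp: thin_layer_const_def)
  finally show ?thesis .
next
  case False
  then have "1 \<le> (\<rho> / c1) powr \<gamma>" using constants by (intro ge_one_powr_ge_zero) auto
  also have "\<dots> = c1 powr (- \<gamma>) * \<rho> powr \<gamma>"
    using constants assms(3) by (simp add: powr_divide powr_minus field_simps)
  also have "\<dots> \<le> thin_layer_const C1 c1 \<gamma> * \<rho> powr \<gamma>"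
    using constants by (intro mult_right_mono) (auto simp: thin_layer_const_def)
  finally have "ennreal 1 \<le> ennreal (thin_layer_const C1 c1 \<gamma> * \<rho> powr \<gamma>)" by (rule ennreal_leI)
  have "hausdorff d {x\<in>P. near {x} (E - P) (\<rho> * 2 powr (- real_of_int k))} \<le> 1 * hausdorff d P"
    by (simp add: hausdorff_mono)
  also have "\<dots> \<le> ennreal (thin_layer_const C1 c1 \<gamma> * \<rho> powr \<gamma>) * hausdorff d P"
    using \<open>ennreal 1 \<le> _\<close> by (intro mult_right_mono) simp_all
  finally show ?thesis .
qed

end

section \<open>Cubes near the boundary of a dyadic cube\<close>

definition near_boundary_count_const :: "nat \<Rightarrow> real \<Rightarrow> real \<Rightarrow> real \<Rightarrow> real \<Rightarrow> real \<Rightarrow> real \<Rightarrow> real" where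
  "near_boundary_count_const N CA C1 c1 d \<gamma> \<kappa> =
     CA * cube_measure_const N CA C1 c1 d * thin_layer_const C1 c1 \<gamma> * (\<kappa> + 2 * C1) powr \<gamma> * (3 / c1) powr d"

lemma infsum_le_suminf_by_levels:
  fixes f :: "'a \<Rightarrow> ennreal" and lev :: "'a \<Rightarrow> nat" and b :: "nat \<Rightarrow> real"
  assumes "summable b" "\<And>j. 0 \<le> b j"
    and level: "\<And>j G. finite G \<Longrightarrow> G \<subseteq> {x\<in>S. lev x = j} \<Longrightarrow> sum f G \<le> ennreal (b j)"
  shows "infsum f S \<le> ennreal (suminf b)"
proof (rule infsum_le_finite_sums)
  show "f summable_on S" by (rule nonneg_summable_on_complete) simp
  fix G assume G: "finite G" "G \<subseteq> S"
  have "sum f G = (\<Sum>j\<in>lev ` G. sum f {x\<in>G. lev x = j})"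
    by (rule sum.group[OF G(1) finite_imageI[OF G(1)] order_refl, symmetric])
  also have "\<dots> \<le> (\<Sum>j\<in>lev ` G. ennreal (b j))"
    by (intro sum_mono level) (use G in auto)
  also have "\<dots> = ennreal (\<Sum>j\<in>lev ` G. b j)" using assms(2) by (rule sum_ennreal)
  also have "\<dots> \<le> ennreal (suminf b)" by (intro ennreal_leI sum_le_suminf) (use assms G in auto)
  finally show "sum f G \<le> ennreal (suminf b)" .
qed

context ADR_dyadic_system
begin

lemma near_boundary_count_const_nonneg: "0 \<le> near_boundary_count_const N CA C1 c1 d \<gamma> \<kappa>"
  using constants
  by (simp add: near_boundary_count_const_def cube_measure_const_def thin_layer_const_def)

lemma dist_cube_centers_ge:
  assumes "k \<in> L" "P \<in> D k" "P' \<in> D k" "P \<noteq> P'"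
    and "ball z (c1 * 2 powr (- real_of_int k)) \<inter> E \<subseteq> P"
    and "z' \<in> E" "ball z' (c1 * 2 powr (- real_of_int k)) \<inter> E \<subseteq> P'"
  shows "c1 * 2 powr (- real_of_int k) \<le> dist z z'"
proof (rule ccontr)
  assume "\<not> ?thesis"
  then have "z' \<in> P" using assms(5,6) by auto
  moreover have "z' \<in> P'" using assms(6,7) constants by auto
  ultimately show False using cube_disjoint[OF assms(1-4)] by blast
qed

text \<open>Disjoint cubes of level k contain separated surface balls of radius c1 2^-k / 3.\<close>
lemma card_cubes_le_hausdorff:
  assumes k: "k \<in> L" and G: "finite G" "G \<subseteq> D k" "E \<notin> G" "\<Union>G \<subseteq> X"
  shows "of_nat (card G) * ennreal ((c1 * 2 powr (- real_of_int k) / 3) powr d / CA) \<le> hausdorff d X"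
proof -
  define l where "l = 2 powr (- real_of_int k)"
  define r where "r = c1 * l / 3"
  have lr: "0 < r" "r \<le> c1 * l" "r < c1 * l" using constants by (auto simp: l_def r_def)
  have "\<forall>P\<in>G. \<exists>z. z \<in> E \<and> ball z (c1 * l) \<inter> E \<subseteq> P"
    using cube_ballE[OF k] G(2) unfolding l_def by (metis subsetD)
  then obtain zc where zc: "\<And>P. P \<in> G \<Longrightarrow> zc P \<in> E \<and> ball (zc P) (c1 * l) \<inter> E \<subseteq> P" by metis
  define B where "B P = ball (zc P) r \<inter> E" for P
  have B_sub: "B P \<subseteq> P" if "P \<in> G" for P
    using zc[OF that] subset_ball[OF lr(2), of "zc P"] unfolding B_def by blast
  have sep: "r \<le> dist x y" if "P \<in> G" "P' \<in> G" "P \<noteq> P'" "x \<in> B P" "y \<in> B P'" for P P' x y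
  proof -
    have "c1 * l \<le> dist (zc P) (zc P')"
      using dist_cube_centers_ge[OF k _ _ that(3)] G(2) that(1,2) zc[OF that(1)] zc[OF that(2)]
      unfolding l_def by blast
    moreover have "dist (zc P) x < r" "dist (zc P') y < r" using that(4,5) by (auto simp: B_def)
    ultimately show ?thesis
      using dist_triangle[of "zc P" "zc P'" x] dist_triangle[of x "zc P'" y]
      by (simp add: r_def dist_commute)
  qed
  have lower: "ennreal (r powr d / CA) \<le> hausdorff d (B P)" if "P \<in> G" for P
  proof -
    have "below_diam E r"
      using below_diam_if_proper_cube[OF k, of P] G(2,3) that lr(3) by (auto simp: l_def)
    then show ?thesis unfolding B_def using ADR_bounds(1) zc[OF that] lr(1) by blast
  qed
  have "of_nat (card G) * ennreal (r powr d / CA) \<le> (\<Sum>P\<in>G. hausdorff d (B P))"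
    by (rule sum_bounded_below) (rule lower)
  also have "\<dots> \<le> hausdorff d (\<Union>P\<in>G. B P)"
    by (rule sum_hausdorff_le_UNION_separated[OF G(1) lr(1)]) (rule sep)
  also have "\<dots> \<le> hausdorff d X" using B_sub G(4) by (intro hausdorff_mono) blast
  finally show ?thesis unfolding r_def l_def .
qed

lemma subcube_subset_boundary_layer:
  assumes "Q' \<in> dsubcubes L D (k0, P)" "fst Q' = k0 + int j" "near (snd Q') (E - P) (\<kappa> * dlen Q')"
  shows "snd Q' \<subseteq> {x\<in>P. near {x} (E - P) ((\<kappa> + 2 * C1) * 2 powr (- real j) * 2 powr (- real_of_int k0))}"
proof
  fix x assume "x \<in> snd Q'"
  have "Q' \<in> dcubes L D" using assms(1) by (simp add: dsubcubes_def)
  then obtain z where "snd Q' \<subseteq> ball z (C1 * dlen Q')" "snd Q' \<noteq> {}" by (rule cube_subset_ball_dlen)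
  then have "near {x} (E - P) (\<kappa> * dlen Q' + 2 * (C1 * dlen Q'))"
    using near_singleton_if_near_subset_ball \<open>x \<in> snd Q'\<close> assms(3) by blast
  moreover have "\<kappa> * dlen Q' + 2 * (C1 * dlen Q') = (\<kappa> + 2 * C1) * 2 powr (- real j) * 2 powr (- real_of_int k0)"
  proof -
    have "dlen Q' = 2 powr (- real_of_int (k0 + int j))" using assms(2) by (cases Q') (simp add: dlen_def)
    then show ?thesis by (simp add: powr_add[symmetric] algebra_simps)
  qed
  ultimately show "x \<in> {x\<in>P. near {x} (E - P) ((\<kappa> + 2 * C1) * 2 powr (- real j) * 2 powr (- real_of_int k0))}"
    using \<open>x \<in> snd Q'\<close> assms(1) by (auto simp: dsubcubes_def)
qed

text \<open>The cubes of level k0 + j near E - P lie in the boundary layer of P of relative width about 2^-j.\<close>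
lemma card_near_boundary_level_measure_le:
  assumes "(k0, P) \<in> dcubes L D" "0 < \<kappa>" "finite G"
    and G: "G \<subseteq> {Q' \<in> dsubcubes L D (k0, P). near (snd Q') (E - P) (\<kappa> * dlen Q') \<and> fst Q' = k0 + int j}"
  shows "real (card G) * ((c1 * 2 powr (- real_of_int (k0 + int j)) / 3) powr d / CA)
    \<le> thin_layer_const C1 c1 \<gamma> * ((\<kappa> + 2 * C1) * 2 powr (- real j)) powr \<gamma>
      * (cube_measure_const N CA C1 c1 d * (2 powr (- real_of_int k0)) powr d)"
    (is "real (card G) * ?r \<le> ?T * ?\<rho> powr \<gamma> * (?S * ?l0 powr d)")
proof (cases "G = {}")
  case True
  then show ?thesis using constants by (simp add: cube_measure_const_def thin_layer_const_def)
next
  case False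
  define k where "k = k0 + int j"
  have k0: "k0 \<in> L" "P \<in> D k0" using assms(1) by (auto simp: dcubes_def)
  have "P \<noteq> E" using False G by (auto simp: near_def)
  have level: "k \<in> L" "fst Q' = k" "snd Q' \<in> D k" "snd Q' \<subseteq> P" if "Q' \<in> G" for Q'
    using G that by (auto simp: dsubcubes_def dcubes_def k_def)
  have "inj_on snd G" using level(2) by (intro inj_onI) (metis prod.collapse)
  then have "ennreal (real (card G) * ?r) = of_nat (card (snd ` G)) * ennreal ?r"
    by (subst ennreal_mult) (use constants in \<open>auto simp: card_image ennreal_of_nat_eq_real_of_nat\<close>)
  also have "\<dots> \<le> hausdorff d {x\<in>P. near {x} (E - P) (?\<rho> * ?l0)}"
    unfolding k_def[symmetric]
  proof (rule card_cubes_le_hausdorff)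
    show "\<Union>(snd ` G) \<subseteq> {x\<in>P. near {x} (E - P) (?\<rho> * ?l0)}"
      using subcube_subset_boundary_layer G by blast
    show "E \<notin> snd ` G" using level(4) cube_subset[OF k0] \<open>P \<noteq> E\<close> by blast
  qed (use False level assms(3) in auto)
  also have "\<dots> \<le> ennreal (?T * ?\<rho> powr \<gamma>) * hausdorff d P"
    using constants \<open>0 < \<kappa>\<close> by (intro hausdorff_boundary_layer_le[OF k0]) simp
  also have "\<dots> \<le> ennreal (?T * ?\<rho> powr \<gamma>) * ennreal (?S * ?l0 powr d)"
    by (intro mult_left_mono hausdorff_cube_le[OF k0 \<open>P \<noteq> E\<close>]) simp
  finally show ?thesis
    using constants by (simp add: ennreal_mult[symmetric] ennreal_le_iff cube_measure_const_def thin_layer_const_def)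
qed

text \<open>By the thin boundary property the layer has measure at most a multiple of 2^(-j gamma) 2^(-k0 d),
  while each cube of level k0 + j has measure about 2^(-(k0 + j) d).\<close>
lemma card_near_boundary_level_le:
  assumes "(k0, P) \<in> dcubes L D" "0 < \<kappa>" "finite G"
    and G: "G \<subseteq> {Q' \<in> dsubcubes L D (k0, P). near (snd Q') (E - P) (\<kappa> * dlen Q') \<and> fst Q' = k0 + int j}"
  shows "real (card G) \<le> near_boundary_count_const N CA C1 c1 d \<gamma> \<kappa> * 2 powr (real j * (d - \<gamma>))"
proof -
  define t where "t = 2 powr (- real j)"
  define l0 where "l0 = 2 powr (- real_of_int k0)"
  define S where "S = cube_measure_const N CA C1 c1 d"
  define T where "T = thin_layer_const C1 c1 \<gamma>"
  have "c1 * 2 powr (- real_of_int (k0 + int j)) / 3 = (c1 / 3) * (l0 * t)"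
    by (simp add: l0_def t_def powr_add[symmetric])
  then have "(c1 * 2 powr (- real_of_int (k0 + int j)) / 3) powr d = (c1 / 3) powr d * (l0 powr d * t powr d)"
    using constants by (simp only: powr_mult l0_def t_def)
  moreover have "((\<kappa> + 2 * C1) * 2 powr (- real j)) powr \<gamma> = (\<kappa> + 2 * C1) powr \<gamma> * t powr \<gamma>"
    using constants \<open>0 < \<kappa>\<close> by (simp add: t_def powr_mult)
  ultimately have "real (card G) * ((c1 / 3) powr d * (l0 powr d * t powr d) / CA)
      \<le> T * ((\<kappa> + 2 * C1) powr \<gamma> * t powr \<gamma>) * (S * l0 powr d)"
    using card_near_boundary_level_measure_le[OF assms] unfolding S_def T_def l0_def by simp
  then have "real (card G) \<le> CA * S * T * (\<kappa> + 2 * C1) powr \<gamma> * (3 / c1) powr d * (t powr \<gamma> / t powr d)"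
    using constants by (simp add: l0_def t_def powr_divide field_simps)
  also have "t powr \<gamma> / t powr d = 2 powr (real j * (d - \<gamma>))"
    by (simp add: t_def powr_powr powr_diff[symmetric] algebra_simps)
  finally show ?thesis by (simp add: near_boundary_count_const_def S_def T_def)
qed

lemma sum_near_boundary_level_le:
  assumes "(k0, P) \<in> dcubes L D" "0 < \<kappa>" "0 \<le> M"
    and g: "\<And>Q'. Q' \<in> dcubes L D \<Longrightarrow> g Q' \<le> ennreal (M * dlen Q' ^ n)"
    and G: "finite G" "G \<subseteq> {Q' \<in> dsubcubes L D (k0, P). near (snd Q') (E - P) (\<kappa> * dlen Q') \<and> fst Q' = k0 + int j}"
  shows "sum g G \<le> ennreal (M * near_boundary_count_const N CA C1 c1 d \<gamma> \<kappa> * dlen (k0, P) ^ n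
                             * (2 powr (d - \<gamma> - real n)) ^ j)"
proof -
  define C where "C = near_boundary_count_const N CA C1 c1 d \<gamma> \<kappa>"
  define l where "l = 2 powr (- real_of_int (k0 + int j))"
  have "sum g G \<le> (\<Sum>Q'\<in>G. ennreal (M * l ^ n))"
    using G(2) by (intro sum_mono) (auto simp: dsubcubes_def dlen_def l_def intro!: order_trans[OF g])
  also have "\<dots> = ennreal (real (card G) * (M * l ^ n))"
    using \<open>0 \<le> M\<close> by (simp add: ennreal_of_nat_eq_real_of_nat ennreal_mult l_def)
  also have "\<dots> \<le> ennreal (C * 2 powr (real j * (d - \<gamma>)) * (M * l ^ n))"
    unfolding C_def using \<open>0 \<le> M\<close>
    by (intro ennreal_leI mult_right_mono card_near_boundary_level_le[OF assms(1,2) G]) (simp add: l_def)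
  also have "2 powr (real j * (d - \<gamma>)) * l ^ n = dlen (k0, P) ^ n * (2 powr (d - \<gamma> - real n)) ^ j"
  proof -
    have "l ^ n = 2 powr (- real_of_int (k0 + int j) * real n)"
      by (simp add: l_def powr_realpow[symmetric] powr_powr)
    moreover have "(2 powr (d - \<gamma> - real n)) ^ j = 2 powr ((d - \<gamma> - real n) * real j)"
      by (simp add: powr_realpow[symmetric] powr_powr)
    moreover have "dlen (k0, P) ^ n = 2 powr (- real_of_int k0 * real n)"
      by (simp add: dlen_def powr_realpow[symmetric] powr_powr)
    ultimately show ?thesis by (simp add: powr_add[symmetric] algebra_simps)
  qed
  then have "C * 2 powr (real j * (d - \<gamma>)) * (M * l ^ n) = M * C * dlen (k0, P) ^ n * (2 powr (d - \<gamma> - real n)) ^ j"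
    by (simp add: algebra_simps)
  finally show ?thesis unfolding C_def .
qed

lemma near_boundary_sum_le:
  assumes "(k0, P) \<in> dcubes L D" "0 < \<kappa>" "d \<le> real n" "0 \<le> M"
    and g: "\<And>Q'. Q' \<in> dcubes L D \<Longrightarrow> g Q' \<le> ennreal (M * dlen Q' ^ n)"
  shows "(\<Sum>\<^sub>\<infinity>Q'\<in>{Q' \<in> dsubcubes L D (k0, P). near (snd Q') (E - P) (\<kappa> * dlen Q')}. g Q')
     \<le> ennreal (M * near_boundary_count_const N CA C1 c1 d \<gamma> \<kappa> / (1 - 2 powr (d - \<gamma> - real n))
                 * dlen (k0, P) ^ n)"
proof -
  define a where "a = M * near_boundary_count_const N CA C1 c1 d \<gamma> \<kappa> * dlen (k0, P) ^ n"
  define q where "q = 2 powr (d - \<gamma> - real n)"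
  have "2 powr (d - \<gamma> - real n) < 2 powr 0"
    using constants \<open>d \<le> real n\<close> by (intro powr_less_mono) auto
  then have q: "0 < q" "q < 1" by (auto simp: q_def)
  have a: "0 \<le> a"
    using \<open>0 \<le> M\<close> near_boundary_count_const_nonneg by (simp add: a_def dlen_def)
  have "(\<Sum>\<^sub>\<infinity>Q'\<in>{Q' \<in> dsubcubes L D (k0, P). near (snd Q') (E - P) (\<kappa> * dlen Q')}. g Q')
      \<le> ennreal (\<Sum>j. a * q ^ j)"
  proof (rule infsum_le_suminf_by_levels[where lev = "\<lambda>Q'. nat (fst Q' - k0)"])
    fix j G assume "finite G" "G \<subseteq> {Q' \<in> {Q' \<in> dsubcubes L D (k0, P). near (snd Q') (E - P) (\<kappa> * dlen Q')}.
      nat (fst Q' - k0) = j}"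
    then show "sum g G \<le> ennreal (a * q ^ j)"
      unfolding a_def q_def
      by (intro sum_near_boundary_level_le[OF assms(1,2,4) g]) (auto simp: dsubcubes_def)
  qed (use a q in \<open>auto intro: summable_mult summable_geometric\<close>)
  also have "(\<Sum>j. a * q ^ j) = a / (1 - q)"
    using q by (simp add: suminf_mult suminf_geometric summable_geometric)
  finally show ?thesis by (simp add: a_def q_def)
qed

end

theorem lemma7p6:
  fixes n :: nat and d CA c1 C1 \<gamma> \<eta> K \<kappa> :: real and N :: nat
  assumes "DIM('a::euclidean_space) = Suc n"
    and "0 < d" and "d \<le> real n"
    and "0 < \<eta>" and "\<eta> < 1" and "1 < K" and "0 < \<kappa>"
  shows "\<exists>C::real. \<forall>(\<Omega>::'a set) L D W.
     open \<Omega> \<and> corkscrew \<Omega> \<and> ADR d CA (frontier \<Omega>) \<and>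
     dyadic_system d (frontier \<Omega>) L D c1 C1 N \<gamma> \<and> whitney \<Omega> W \<longrightarrow>
     (\<forall>Q\<in>dcubes L D.
        (\<Sum>\<^sub>\<infinity>Q'\<in>{Q' \<in> dsubcubes L D Q. near (snd Q') (frontier \<Omega> - snd Q) (\<kappa> * dlen Q')}.
           \<Sum>\<^sub>\<infinity>I\<in>WQ W \<eta> K Q'. hausdorff (real n) (frontier (wcube I)))
        \<le> ennreal (C * dlen Q ^ n))"
proof -
  have "1 \<le> n" using assms(2,3) by linarith
  define M where "M = WQ_frontier_const n C1 \<eta> K"
  show ?thesis
  proof (intro exI[of _ "M * near_boundary_count_const N CA C1 c1 d \<gamma> \<kappa> / (1 - 2 powr (d - \<gamma> - real n))"]
      allI impI ballI)
    fix \<Omega> :: "'a set" and L D W Q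
    assume H: "open \<Omega> \<and> corkscrew \<Omega> \<and> ADR d CA (frontier \<Omega>) \<and>
      dyadic_system d (frontier \<Omega>) L D c1 C1 N \<gamma> \<and> whitney \<Omega> W" and Q: "Q \<in> dcubes L D"
    then have "ADR d CA (frontier \<Omega>)" "dyadic_system d (frontier \<Omega>) L D c1 C1 N \<gamma>" "whitney \<Omega> W"
      by blast+
    then interpret ADR_dyadic_system d CA "frontier \<Omega>" L D c1 C1 N \<gamma>
      by (intro ADR_dyadic_system.intro)
    have "0 \<le> C1" "0 \<le> K" using constants assms(6) by auto
    then have M: "0 \<le> M" unfolding M_def by (rule WQ_frontier_const_nonneg)
    have "(\<Sum>\<^sub>\<infinity>I\<in>WQ W \<eta> K Q'. hausdorff (real n) (frontier (wcube I))) \<le> ennreal (M * dlen Q' ^ n)"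
      if Q': "Q' \<in> dcubes L D" for Q'
    proof -
      obtain z where "snd Q' \<subseteq> ball z (C1 * dlen Q')" "snd Q' \<noteq> {}" by (rule cube_subset_ball_dlen[OF Q'])
      then show ?thesis unfolding M_def
        by (rule WQ_frontier_sum_le[OF assms(1) \<open>1 \<le> n\<close> assms(4) \<open>0 \<le> K\<close> \<open>0 \<le> C1\<close>
            whitney_positive_disjoint[OF \<open>whitney \<Omega> W\<close>]])
    qed
    moreover obtain k0 P where "Q = (k0, P)" by fastforce
    ultimately show "(\<Sum>\<^sub>\<infinity>Q'\<in>{Q' \<in> dsubcubes L D Q. near (snd Q') (frontier \<Omega> - snd Q) (\<kappa> * dlen Q')}.
           \<Sum>\<^sub>\<infinity>I\<in>WQ W \<eta> K Q'. hausdorff (real n) (frontier (wcube I)))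
        \<le> ennreal (M * near_boundary_count_const N CA C1 c1 d \<gamma> \<kappa> / (1 - 2 powr (d - \<gamma> - real n)) * dlen Q ^ n)"
      using near_boundary_sum_le[of k0 P \<kappa> n M] Q assms(3,7) M by simp
  qed
qed

end
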